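(* Let $\mathcal{I}$ be any instance of vertex cover on $n$ vertices. Consider a partial branch-and-bound tree $\mathcal{TP}_S$ generated by strong-branching with the product score function and the worst-bound node selection rule with ties broken by selecting a node of largest depth. Let $N$ be a node of this tree that is not pruned, let $j\in I(\mathcal{I},N)$, and suppose that strong-branching decides to branch on $x_j$ at $N$. Then (1) $\mathcal{TP}_S^B(\mathcal{I})=\mathrm{OPT}(\mathcal{I})$; and (2) after branching on $x_j$, only $\mathcal{O}(n)$ further branchings are needed to find an integral optimal solution of $\mathcal{I}$.
   Context: Vertex cover IP for a graph $G=(V,E)$, $n=|V|$: minimize $\sum_{v} x_v$ subject to $x_u+x_v\ge 1$ ($uv\in E$), $x\in\{0,1\}^V$; LP relaxation uses $x\in[0,1]^V$; $\mathrm{OPT}(\mathcal{I})$ is the IP optimal value. Branch-and-bound: each node $N$ is the LP relaxation plus constraints $x_j=0$ or $x_j=1$ for variables fixed on the path from the root; branching on $x_j$ at $N$ creates children with $x_j=0$ and $x_j=1$ added. The LP solver returns some optimal solution of each node LP. A node is pruned if its LP is infeasible, or the returned solution is integral, or its LP value is strictly larger than the value of an integral solution already found. Worst-bound node selection: process an open node of smallest LP value. Strong branching with product score: at node $N$ with LP value $z$ and returned solution $\hat x$, for each $j$ with $\hat x_j$ fractional let $z^0_j,z^1_j$ be the optimal LP values of the children ($+\infty$ if infeasible), $\Delta^-_j=z^0_j-z$, $\Delta^+_j=z^1_j-z$, $\mathrm{score}_P(j)=\Delta^+_j\Delta^-_j$ with $0\cdot\infty=0$; branch on a maximizer. $I(\mathcal{I},N)$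 (the maximal set of integer variables at $N$) is the union, over all optimal solutions $x$ of the LP at node $N$, of the sets $\{j: x_j\in\{0,1\}\}$. A partial tree is a tree produced by this procedure before termination; its dual bound $\mathcal{TP}_S^B(\mathcal{I})$ is the minimum LP value over its unpruned (open) leaves. *)

theory Defs
  imports Complex_Main "HOL-Library.Extended_Real"
begin

text \<open>A node of the branch-and-bound tree is identified with
  the partial assignment of fixed variables on its root path
  (Some True: x_j = 1, Some False: x_j = 0).\<close>

type_synonym fixing = "nat \<rightharpoonup> bool"

definition is_vc_graph :: "nat set \<Rightarrow> nat set set \<Rightarrow> bool" where
  "is_vc_graph V E \<longleftrightarrow> finite V \<and> (\<forall>e\<in>E. \<exists>u v. u \<noteq> v \<and> u \<in> V \<and> v \<in> V \<and> e = {u, v})"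

definition obj :: "nat set \<Rightarrow> (nat \<Rightarrow> real) \<Rightarrow> real" where
  "obj V x = (\<Sum>v\<in>V. x v)"

definition lp_feas :: "nat set \<Rightarrow> nat set set \<Rightarrow> fixing \<Rightarrow> (nat \<Rightarrow> real) \<Rightarrow> bool" where
  "lp_feas V E F x \<longleftrightarrow>
     (\<forall>v\<in>V. 0 \<le> x v \<and> x v \<le> 1) \<and> (\<forall>v. v \<notin> V \<longrightarrow> x v = 0) \<and>
     (\<forall>u v. {u, v} \<in> E \<longrightarrow> 1 \<le> x u + x v) \<and>
     (\<forall>j b. F j = Some b \<longrightarrow> x j = (if b then 1 else 0))"

text \<open>Optimal LP value at a node; \<infinity> if infeasible.\<close>
definition lpval :: "nat set \<Rightarrow> nat set set \<Rightarrow> fixing \<Rightarrow> ereal" where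
  "lpval V E F = (INF x \<in> {x. lp_feas V E F x}. ereal (obj V x))"

definition lp_opt :: "nat set \<Rightarrow> nat set set \<Rightarrow> fixing \<Rightarrow> (nat \<Rightarrow> real) \<Rightarrow> bool" where
  "lp_opt V E F x \<longleftrightarrow> lp_feas V E F x \<and> ereal (obj V x) = lpval V E F"

definition integral_on :: "nat set \<Rightarrow> (nat \<Rightarrow> real) \<Rightarrow> bool" where
  "integral_on V x \<longleftrightarrow> (\<forall>v\<in>V. x v = 0 \<or> x v = 1)"

definition ip_feas :: "nat set \<Rightarrow> nat set set \<Rightarrow> (nat \<Rightarrow> real) \<Rightarrow> bool" where
  "ip_feas V E x \<longleftrightarrow> lp_feas V E Map.empty x \<and> integral_on V x"

definition OPT :: "nat set \<Rightarrow> nat set set \<Rightarrow> ereal" where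
  "OPT V E = (INF x \<in> {x. ip_feas V E x}. ereal (obj V x))"

definition int_vars :: "nat set \<Rightarrow> nat set set \<Rightarrow> fixing \<Rightarrow> nat set" where
  "int_vars V E F = (\<Union>x \<in> {x. lp_opt V E F x}. {j \<in> V. x j = 0 \<or> x j = 1})"

definition depth :: "fixing \<Rightarrow> nat" where
  "depth F = card (dom F)"

definition frac_vars :: "nat set \<Rightarrow> (nat \<Rightarrow> real) \<Rightarrow> nat set" where
  "frac_vars V x = {j \<in> V. x j \<noteq> 0 \<and> x j \<noteq> 1}"

text \<open>Product score of strong branching, with the convention 0 * \<infinity> = 0.\<close>
definition score_P :: "nat set \<Rightarrow> nat set set \<Rightarrow> fixing \<Rightarrow> nat \<Rightarrow> ereal" where
  "score_P V E F j =
     (let z = lpval V E F;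
          dm = lpval V E (F(j \<mapsto> False)) - z;
          dp = lpval V E (F(j \<mapsto> True)) - z
      in if dp = 0 \<or> dm = 0 then 0 else dp * dm)"

definition sb_choice :: "nat set \<Rightarrow> nat set set \<Rightarrow> fixing \<Rightarrow> (nat \<Rightarrow> real) \<Rightarrow> nat \<Rightarrow> bool" where
  "sb_choice V E F x j \<longleftrightarrow> j \<in> frac_vars V x \<and>
     (\<forall>k \<in> frac_vars V x. score_P V E F k \<le> score_P V E F j)"

definition wb_select :: "nat set \<Rightarrow> nat set set \<Rightarrow> fixing set \<Rightarrow> fixing \<Rightarrow> bool" where
  "wb_select V E Os N \<longleftrightarrow> N \<in> Os \<and> (\<forall>M\<in>Os. lpval V E N \<le> lpval V E M) \<and>
     (\<forall>M\<in>Os. lpval V E M = lpval V E N \<longrightarrow> depth M \<le> depth N)"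

text \<open>State of the procedure: open (unpruned, unbranched) leaves, and integral solutions found.\<close>
record bb_state =
  opn :: "fixing set"
  fnd :: "(nat \<Rightarrow> real) set"

definition incumbent :: "nat set \<Rightarrow> (nat \<Rightarrow> real) set \<Rightarrow> ereal" where
  "incumbent V S = (INF x \<in> S. ereal (obj V x))"

definition bb_init :: bb_state where
  "bb_init = \<lparr>opn = {Map.empty}, fnd = {}\<rparr>"

definition bb_branch :: "nat set \<Rightarrow> nat set set \<Rightarrow> bb_state \<Rightarrow> fixing \<Rightarrow> (nat \<Rightarrow> real) \<Rightarrow> nat \<Rightarrow> bb_state \<Rightarrow> bool" where
  "bb_branch V E s N x j s' \<longleftrightarrow>
     wb_select V E (opn s) N \<and> lpval V E N \<le> incumbent V (fnd s) \<and>
     lp_opt V E N x \<and> \<not> integral_on V x \<and> sb_choice V E N x j \<and>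
     s' = \<lparr>opn = (opn s - {N}) \<union>
                  {C \<in> {N(j \<mapsto> False), N(j \<mapsto> True)}.
                     lpval V E C < \<infinity> \<and> lpval V E C \<le> incumbent V (fnd s)},
           fnd = fnd s\<rparr>"

definition bb_integral :: "nat set \<Rightarrow> nat set set \<Rightarrow> bb_state \<Rightarrow> fixing \<Rightarrow> (nat \<Rightarrow> real) \<Rightarrow> bb_state \<Rightarrow> bool" where
  "bb_integral V E s N x s' \<longleftrightarrow>
     wb_select V E (opn s) N \<and> lpval V E N \<le> incumbent V (fnd s) \<and>
     lp_opt V E N x \<and> integral_on V x \<and>
     s' = \<lparr>opn = {M \<in> opn s - {N}. lpval V E M \<le> incumbent V (insert x (fnd s))},
           fnd = insert x (fnd s)\<rparr>"

definition bb_prune :: "nat set \<Rightarrow> nat set set \<Rightarrow> bb_state \<Rightarrow> fixing \<Rightarrow> bb_state \<Rightarrow> bool" where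
  "bb_prune V E s N s' \<longleftrightarrow>
     wb_select V E (opn s) N \<and> (lpval V E N = \<infinity> \<or> incumbent V (fnd s) < lpval V E N) \<and>
     s' = \<lparr>opn = opn s - {N}, fnd = fnd s\<rparr>"

text \<open>One step; the boolean records whether a branching was performed.\<close>
inductive bb_step :: "nat set \<Rightarrow> nat set set \<Rightarrow> bb_state \<Rightarrow> bool \<Rightarrow> bb_state \<Rightarrow> bool"
  for V E where
  "bb_branch V E s N x j s' \<Longrightarrow> bb_step V E s True s'"
| "bb_integral V E s N x s' \<Longrightarrow> bb_step V E s False s'"
| "bb_prune V E s N s' \<Longrightarrow> bb_step V E s False s'"

inductive bb_reach :: "nat set \<Rightarrow> nat set set \<Rightarrow> bb_state \<Rightarrow> bool" for V E where
  "bb_reach V E bb_init"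
| "bb_reach V E s \<Longrightarrow> bb_step V E s b s' \<Longrightarrow> bb_reach V E s'"

text \<open>bb_run V E s k t: t is reached from s by a sequence of steps containing k branchings.\<close>
inductive bb_run :: "nat set \<Rightarrow> nat set set \<Rightarrow> bb_state \<Rightarrow> nat \<Rightarrow> bb_state \<Rightarrow> bool" for V E where
  "bb_run V E s 0 s"
| "bb_step V E s b s1 \<Longrightarrow> bb_run V E s1 k t \<Longrightarrow> bb_run V E s (k + (if b then 1 else 0)) t"

definition dual_bound :: "nat set \<Rightarrow> nat set set \<Rightarrow> bb_state \<Rightarrow> ereal" where
  "dual_bound V E s = (INF N \<in> opn s. lpval V E N)"

end

theory Submission
  imports Defs
begin

text \<open>The vertex cover LP with fixed variables is half-integral: a feasible point is a convex
  combination of its rounding to \<open>{0, 1/2, 1}\<close> and a feasible point with fewer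
  non-half-integral entries. As the optimal face is convex, if every variable is integral in some
  optimal solution, averaging and rounding gives an integral optimal solution.

  Strong branching picks \<open>j \<in> I(N)\<close> only if the maximal product score is \<open>0\<close>. Then every
  fractional variable has a child keeping the LP value, hence is integral in some optimum, so \<open>N\<close>
  has an integral optimum and its LP value, which is the dual bound under worst-bound selection,
  is OPT. From then on only nodes of value OPT at the deepest level are processed: a node with an
  integral optimum has a child of value OPT one level deeper, and a node without one has both
  children strictly worse (its maximal score is positive). So an optimal solution is found after
  at most \<open>2n\<close> further branchings.\<close>

lemma lpval_le_obj: "lp_feas V E F x \<Longrightarrow> lpval V E F \<le> ereal (obj V x)"
  unfolding lpval_def by (rule INF_lower) simp

lemma lpval_greatest: "(\<And>x. lp_feas V E F x \<Longrightarrow> c \<le> ereal (obj V x)) \<Longrightarrow> c \<le> lpval V E F"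
  unfolding lpval_def by (rule INF_greatest) simp

lemma lpval_eq_infinity_iff: "lpval V E F = \<infinity> \<longleftrightarrow> (\<forall>x. \<not> lp_feas V E F x)"
proof
  assume "lpval V E F = \<infinity>"
  then show "\<forall>x. \<not> lp_feas V E F x" using lpval_le_obj by fastforce
next
  assume "\<forall>x. \<not> lp_feas V E F x"
  then have empty: "Collect (lp_feas V E F) = {}" by auto
  show "lpval V E F = \<infinity>" unfolding lpval_def empty by (simp add: top_ereal_def)
qed

lemma lp_opt_lpval: "lp_opt V E F x \<Longrightarrow> lpval V E F = ereal (obj V x)"
  unfolding lp_opt_def by simp

lemma lp_opt_obj_eq: "lp_opt V E F x \<Longrightarrow> lp_opt V E F y \<Longrightarrow> obj V x = obj V y"
  unfolding lp_opt_def by (metis ereal.inject)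

lemma lp_feas_bounds: "lp_feas V E F x \<Longrightarrow> 0 \<le> x u \<and> x u \<le> 1"
  unfolding lp_feas_def by (cases "u \<in> V") auto

lemma lp_feas_fixed: "lp_feas V E F x \<Longrightarrow> F j = Some b \<Longrightarrow> x j = (if b then 1 else 0)"
  unfolding lp_feas_def by blast

lemma lp_feas_upd_iff:
  "F j = None \<Longrightarrow> lp_feas V E (F(j \<mapsto> b)) x \<longleftrightarrow> lp_feas V E F x \<and> x j = (if b then 1 else 0)"
  unfolding lp_feas_def by (auto split: if_splits)

lemma lpval_le_upd: "F j = None \<Longrightarrow> lpval V E F \<le> lpval V E (F(j \<mapsto> b))"
  by (rule lpval_greatest) (auto simp: lp_feas_upd_iff intro: lpval_le_obj)

lemma obj_lincomb: "obj V (\<lambda>v. a * f v + b * g v) = a * obj V f + b * obj V g"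
  unfolding obj_def by (simp add: sum.distrib sum_distrib_left)

lemma lp_feas_convex_comb:
  assumes x: "lp_feas V E F x" and y: "lp_feas V E F y" and t: "0 \<le> t" "t \<le> 1"
  shows "lp_feas V E F (\<lambda>v. (1 - t) * x v + t * y v)"
  unfolding lp_feas_def
proof (intro conjI allI ballI impI)
  fix v
  have "0 \<le> x v" "x v \<le> 1" "0 \<le> y v" "y v \<le> 1"
    using lp_feas_bounds[OF x] lp_feas_bounds[OF y] by auto
  then show "0 \<le> (1 - t) * x v + t * y v" "(1 - t) * x v + t * y v \<le> 1"
    using t convex_bound_le[of "x v" 1 "y v" "1 - t" t] by auto
next
  fix v assume "v \<notin> V"
  then show "(1 - t) * x v + t * y v = 0" using x y unfolding lp_feas_def by auto
next
  fix u v assume "{u, v} \<in> E"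
  then have "1 \<le> x u + x v" "1 \<le> y u + y v" using x y unfolding lp_feas_def by auto
  then have "(1 - t) * 1 + t * 1 \<le> (1 - t) * (x u + x v) + t * (y u + y v)"
    using t by (intro add_mono mult_left_mono) auto
  then show "1 \<le> (1 - t) * x u + t * y u + ((1 - t) * x v + t * y v)"
    by (simp add: algebra_simps)
next
  fix j b assume "F j = Some b"
  then show "(1 - t) * x j + t * y j = (if b then 1 else 0)"
    using lp_feas_fixed[OF x] lp_feas_fixed[OF y] by (auto simp: algebra_simps)
qed

lemma lp_opt_convex_comb:
  assumes x: "lp_opt V E F x" and y: "lp_opt V E F y" and t: "0 \<le> t" "t \<le> 1"
  shows "lp_opt V E F (\<lambda>v. (1 - t) * x v + t * y v)"
proof -
  have "obj V (\<lambda>v. (1 - t) * x v + t * y v) = (1 - t) * obj V x + t * obj V y"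
    by (rule obj_lincomb)
  also have "\<dots> = obj V x" using lp_opt_obj_eq[OF x y] by (simp add: algebra_simps)
  finally show ?thesis
    using x y t lp_feas_convex_comb unfolding lp_opt_def by auto
qed

section \<open>Half-integrality\<close>

definition half_int :: "real \<Rightarrow> bool" where
  "half_int a \<longleftrightarrow> a = 0 \<or> a = 1/2 \<or> a = 1"

definition round_half :: "real \<Rightarrow> real" where
  "round_half a = (if a < 1/2 then 0 else if a = 1/2 then 1/2 else 1)"

text \<open>For \<open>0 < m < 1/2\<close> we have \<open>a = (1 - 2m) round_half a + 2m push_half m a\<close>. If every
  non-half-integral value is within \<open>m\<close> of \<open>{0, 1}\<close>, then \<open>push_half m\<close> preserves the LP
  constraints and moves the values at distance exactly \<open>m\<close> to \<open>1/2\<close>.\<close>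
definition push_half :: "real \<Rightarrow> real \<Rightarrow> real" where
  "push_half m a = (if a < 1/2 then a / (2*m) else if a = 1/2 then 1/2 else 1 - (1 - a) / (2*m))"

definition non_half_vars :: "nat set \<Rightarrow> (nat \<Rightarrow> real) \<Rightarrow> nat set" where
  "non_half_vars V x = {v \<in> V. \<not> half_int (x v)}"

lemma half_int_round_half: "half_int (round_half a)"
  unfolding half_int_def round_half_def by auto

lemma round_half_half_int: "half_int a \<Longrightarrow> round_half a = a"
  unfolding round_half_def half_int_def by auto

lemma round_half_edge: "1 \<le> a + b \<Longrightarrow> 1 \<le> round_half a + round_half b"
  unfolding round_half_def by auto

lemma push_half_half_int: "half_int a \<Longrightarrow> push_half m a = a"
  unfolding half_int_def push_half_def by auto

lemma push_half_split:
  "0 < m \<Longrightarrow> m < 1/2 \<Longrightarrow> (1 - 2*m) * round_half a + 2*m * push_half m a = a"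
  unfolding round_half_def push_half_def by (auto simp: field_simps)

lemma push_half_bounds:
  assumes "0 < m" "0 \<le> a" "a \<le> 1" "half_int a \<or> min a (1 - a) \<le> m"
  shows "0 \<le> push_half m a \<and> push_half m a \<le> 1 \<and>
    (a < 1/2 \<longrightarrow> push_half m a \<le> 1/2) \<and> (1/2 \<le> a \<longrightarrow> 1/2 \<le> push_half m a)"
  using assms unfolding push_half_def half_int_def
  by (auto simp: field_simps min_def split: if_splits)

lemma push_half_edge:
  assumes m: "0 < m"
    and a: "0 \<le> a" "a \<le> 1" "half_int a \<or> min a (1 - a) \<le> m"
    and b: "0 \<le> b" "b \<le> 1" "half_int b \<or> min b (1 - b) \<le> m"
    and ab: "1 \<le> a + b"
  shows "1 \<le> push_half m a + push_half m b"
proof -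
  have mixed: "push_half m a + push_half m b = 1 + (a + b - 1) / (2*m)"
    if "a < 1/2 \<and> 1/2 < b \<or> b < 1/2 \<and> 1/2 < a"
    using that m unfolding push_half_def by (auto simp: field_simps)
  show ?thesis
  proof (cases "a < 1/2 \<or> b < 1/2")
    case True
    then have "a < 1/2 \<and> 1/2 < b \<or> b < 1/2 \<and> 1/2 < a" using ab by linarith
    then show ?thesis using mixed ab m by simp
  next
    case False
    then show ?thesis using push_half_bounds[OF m a] push_half_bounds[OF m b] by linarith
  qed
qed

lemma lp_feas_round_half:
  assumes x: "lp_feas V E F x"
  shows "lp_feas V E F (round_half \<circ> x)"
  unfolding lp_feas_def
proof (intro conjI allI ballI impI)
  fix v
  show "0 \<le> (round_half \<circ> x) v" "(round_half \<circ> x) v \<le> 1" unfolding round_half_def by auto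
  assume "v \<notin> V"
  then show "(round_half \<circ> x) v = 0" using x unfolding lp_feas_def round_half_def by auto
next
  fix u v assume "{u, v} \<in> E"
  then show "1 \<le> (round_half \<circ> x) u + (round_half \<circ> x) v"
    using x round_half_edge unfolding lp_feas_def by auto
next
  fix j b assume "F j = Some b"
  then show "(round_half \<circ> x) j = (if b then 1 else 0)"
    using lp_feas_fixed[OF x] unfolding round_half_def by auto
qed

lemma lp_feas_push_half:
  assumes x: "lp_feas V E F x" and m: "0 < m"
    and near: "\<And>v. v \<in> non_half_vars V x \<Longrightarrow> min (x v) (1 - x v) \<le> m"
  shows "lp_feas V E F (push_half m \<circ> x)"
proof -
  have cond: "half_int (x v) \<or> min (x v) (1 - x v) \<le> m" for v
  proof (cases "v \<in> V")
    case False
    then have "x v = 0" using x unfolding lp_feas_def by auto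
    then show ?thesis unfolding half_int_def by simp
  qed (use near in \<open>auto simp: non_half_vars_def\<close>)
  have fixed: "push_half m 0 = 0" "push_half m 1 = 1" unfolding push_half_def by auto
  show ?thesis
    unfolding lp_feas_def
  proof (intro conjI allI ballI impI)
    fix v
    show "0 \<le> (push_half m \<circ> x) v" "(push_half m \<circ> x) v \<le> 1"
      using push_half_bounds[OF m _ _ cond] lp_feas_bounds[OF x] by auto
    assume "v \<notin> V"
    then show "(push_half m \<circ> x) v = 0" using x fixed unfolding lp_feas_def by auto
  next
    fix u v assume "{u, v} \<in> E"
    then have "1 \<le> x u + x v" using x unfolding lp_feas_def by auto
    then show "1 \<le> (push_half m \<circ> x) u + (push_half m \<circ> x) v"
      using push_half_edge[OF m _ _ cond[of u] _ _ cond[of v]] lp_feas_bounds[OF x] by auto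
  next
    fix j b assume "F j = Some b"
    then show "(push_half m \<circ> x) j = (if b then 1 else 0)"
      using lp_feas_fixed[OF x] fixed by auto
  qed
qed

lemma lp_feas_split_half:
  assumes fin: "finite V" and x: "lp_feas V E F x" and ne: "non_half_vars V x \<noteq> {}"
  obtains m where "0 < m" "m < 1/2" "lp_feas V E F (push_half m \<circ> x)"
    "non_half_vars V (push_half m \<circ> x) \<subset> non_half_vars V x"
    "obj V x = (1 - 2*m) * obj V (round_half \<circ> x) + 2*m * obj V (push_half m \<circ> x)"
proof -
  let ?dist = "\<lambda>v. min (x v) (1 - x v)"
  define m where "m = Max (?dist ` non_half_vars V x)"
  have fin_nh: "finite (non_half_vars V x)" using fin unfolding non_half_vars_def by simp
  have near: "\<And>v. v \<in> non_half_vars V x \<Longrightarrow> ?dist v \<le> m"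
    unfolding m_def using fin_nh by simp
  have "m \<in> ?dist ` non_half_vars V x" unfolding m_def using fin_nh ne by simp
  then obtain v0 where v0: "v0 \<in> non_half_vars V x" "m = ?dist v0" by blast
  have "0 \<le> x v0" "x v0 \<le> 1" "\<not> half_int (x v0)"
    using lp_feas_bounds[OF x] v0(1) unfolding non_half_vars_def by auto
  then have m: "0 < m" "m < 1/2" using v0(2) unfolding half_int_def by (auto simp: min_def)
  have "push_half m (x v0) = 1/2"
    using v0(2) \<open>\<not> half_int (x v0)\<close> m unfolding push_half_def half_int_def
    by (auto simp: min_def field_simps)
  then have "v0 \<notin> non_half_vars V (push_half m \<circ> x)" unfolding non_half_vars_def half_int_def by simp
  then have "non_half_vars V (push_half m \<circ> x) \<subset> non_half_vars V x"
    using v0(1) push_half_half_int unfolding non_half_vars_def by fastforce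
  moreover have "obj V x = (1 - 2*m) * obj V (round_half \<circ> x) + 2*m * obj V (push_half m \<circ> x)"
    using obj_lincomb[of V "1 - 2*m" "round_half \<circ> x" "2*m" "push_half m \<circ> x"]
    by (simp add: push_half_split[OF m])
  ultimately show ?thesis using that m lp_feas_push_half[OF x m(1) near] by blast
qed

lemma half_int_feas_below:
  assumes fin: "finite V"
  shows "lp_feas V E F x \<Longrightarrow> \<exists>h. lp_feas V E F h \<and> (\<forall>v\<in>V. half_int (h v)) \<and> obj V h \<le> obj V x"
proof (induction "card (non_half_vars V x)" arbitrary: x rule: less_induct)
  case less
  show ?case
  proof (cases "non_half_vars V x = {}")
    case True
    then show ?thesis using less.prems unfolding non_half_vars_def by auto
  next
    case False
    obtain m where m: "0 < m" "m < 1/2" "lp_feas V E F (push_half m \<circ> x)"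
      "non_half_vars V (push_half m \<circ> x) \<subset> non_half_vars V x"
      "obj V x = (1 - 2*m) * obj V (round_half \<circ> x) + 2*m * obj V (push_half m \<circ> x)"
      using lp_feas_split_half[OF fin less.prems False] by blast
    show ?thesis
    proof (cases "obj V (round_half \<circ> x) \<le> obj V x")
      case True
      then show ?thesis using lp_feas_round_half[OF less.prems] half_int_round_half by auto
    next
      case False
      then have "(1 - 2*m) * obj V x \<le> (1 - 2*m) * obj V (round_half \<circ> x)"
        using m(2) by (intro mult_left_mono) auto
      moreover have "(1 - 2*m) * obj V x = obj V x - 2*m * obj V x" by (simp add: algebra_simps)
      ultimately have "2*m * obj V (push_half m \<circ> x) \<le> 2*m * obj V x" using m(5) by linarith
      then have "obj V (push_half m \<circ> x) \<le> obj V x" using m(1) by simp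
      moreover have "card (non_half_vars V (push_half m \<circ> x)) < card (non_half_vars V x)"
        using m(4) fin unfolding non_half_vars_def by (intro psubset_card_mono) auto
      ultimately show ?thesis using less.hyps m(3) by force
    qed
  qed
qed

lemma finite_half_int_feas:
  assumes fin: "finite V"
  shows "finite {h. lp_feas V E F h \<and> (\<forall>v\<in>V. half_int (h v))}"
proof (rule finite_subset)
  show "finite {h. \<forall>v. (v \<in> V \<longrightarrow> h v \<in> {0, 1/2, 1}) \<and> (v \<notin> V \<longrightarrow> h v = (0::real))}"
    using fin by (intro finite_set_of_finite_funs) auto
qed (auto simp: lp_feas_def half_int_def)

lemma lp_opt_half_int_exists:
  assumes fin: "finite V" and feasible: "lpval V E F \<noteq> \<infinity>"
  obtains h where "lp_opt V E F h" "\<forall>v\<in>V. half_int (h v)"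
proof -
  let ?S = "{h. lp_feas V E F h \<and> (\<forall>v\<in>V. half_int (h v))}"
  obtain x where "lp_feas V E F x" using feasible lpval_eq_infinity_iff by blast
  then have ne: "?S \<noteq> {}" using half_int_feas_below[OF fin] by blast
  define h where "h = arg_min_on (obj V) ?S"
  have hS: "h \<in> ?S" unfolding h_def by (rule arg_min_if_finite(1)[OF finite_half_int_feas[OF fin] ne])
  have hmin: "\<And>g. g \<in> ?S \<Longrightarrow> obj V h \<le> obj V g"
    unfolding h_def by (rule arg_min_least[OF finite_half_int_feas[OF fin] ne])
  have "ereal (obj V h) \<le> lpval V E F"
  proof (rule lpval_greatest)
    fix x assume "lp_feas V E F x"
    then obtain g where "g \<in> ?S" "obj V g \<le> obj V x" using half_int_feas_below[OF fin] by blast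
    then show "ereal (obj V h) \<le> ereal (obj V x)" using hmin by force
  qed
  moreover have "lpval V E F \<le> ereal (obj V h)" using hS lpval_le_obj by blast
  ultimately show ?thesis using that hS unfolding lp_opt_def by auto
qed

lemma round_half_eq_if_half_int:
  assumes x: "lp_feas V E F x" and "non_half_vars V x = {}"
  shows "round_half \<circ> x = x"
proof
  fix v
  show "(round_half \<circ> x) v = x v"
  proof (cases "v \<in> V")
    case True
    then show ?thesis using assms(2) round_half_half_int unfolding non_half_vars_def by auto
  next
    case False
    then have "x v = 0" using x unfolding lp_feas_def by auto
    then show ?thesis unfolding round_half_def by simp
  qed
qed

lemma lp_opt_round_half:
  assumes fin: "finite V" and x: "lp_opt V E F x"
  shows "lp_opt V E F (round_half \<circ> x)"
proof (cases "non_half_vars V x = {}")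
  case True
  then have "round_half \<circ> x = x"
    using x round_half_eq_if_half_int unfolding lp_opt_def by blast
  then show ?thesis using x by simp
next
  case False
  have xf: "lp_feas V E F x" and xv: "ereal (obj V x) = lpval V E F"
    using x unfolding lp_opt_def by auto
  obtain m where m: "0 < m" "m < 1/2" "lp_feas V E F (push_half m \<circ> x)"
    "obj V x = (1 - 2*m) * obj V (round_half \<circ> x) + 2*m * obj V (push_half m \<circ> x)"
    using lp_feas_split_half[OF fin xf False] by blast
  have rf: "lp_feas V E F (round_half \<circ> x)" by (rule lp_feas_round_half[OF xf])
  have "ereal (obj V x) \<le> ereal (obj V (push_half m \<circ> x))"
    "ereal (obj V x) \<le> ereal (obj V (round_half \<circ> x))"
    using xv lpval_le_obj[OF m(3)] lpval_le_obj[OF rf] by simp_all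
  then have "obj V x \<le> obj V (push_half m \<circ> x)" "obj V x \<le> obj V (round_half \<circ> x)" by simp_all
  then have "2*m * obj V x \<le> 2*m * obj V (push_half m \<circ> x)" using m(1) by simp
  moreover have "(1 - 2*m) * obj V x = obj V x - 2*m * obj V x" by (simp add: algebra_simps)
  ultimately have "(1 - 2*m) * obj V (round_half \<circ> x) \<le> (1 - 2*m) * obj V x"
    using m(4) by linarith
  then have "obj V (round_half \<circ> x) \<le> obj V x" using m(2) by simp
  with \<open>obj V x \<le> obj V (round_half \<circ> x)\<close> have "obj V (round_half \<circ> x) = obj V x" by simp
  then show ?thesis using rf xv unfolding lp_opt_def by simp
qed

text \<open>Among the half-integral optimal solutions take one with fewest halves. If some
  \<open>z v = 1/2\<close>, mixing in an optimal \<open>y\<close> with \<open>y v \<in> {0, 1}\<close> and rounding again gives an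
  optimal solution whose halves form a proper subset.\<close>
lemma lp_opt_integral_exists:
  assumes fin: "finite V" and x: "lp_opt V E F x"
    and each: "\<forall>u\<in>V. \<exists>y. lp_opt V E F y \<and> (y u = 0 \<or> y u = 1)"
  shows "\<exists>z. lp_opt V E F z \<and> integral_on V z"
proof -
  let ?P = "\<lambda>z. lp_opt V E F z \<and> (\<forall>v\<in>V. half_int (z v))"
  let ?halves = "\<lambda>z. {v\<in>V. z v = 1/2}"
  have "?P (round_half \<circ> x)" using lp_opt_round_half[OF fin x] half_int_round_half by auto
  from ex_has_least_nat[of ?P, OF this, of "\<lambda>z. card (?halves z)"] obtain z where z: "?P z"
    and zmin: "\<And>z'. ?P z' \<Longrightarrow> card (?halves z) \<le> card (?halves z')" by blast
  show ?thesis
  proof (cases "?halves z = {}")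
    case True
    then have "integral_on V z" using z unfolding integral_on_def half_int_def by auto
    then show ?thesis using z by blast
  next
    case False
    then obtain v where v: "v \<in> V" "z v = 1/2" by blast
    obtain y where y: "lp_opt V E F y" "y v = 0 \<or> y v = 1" using each v(1) by blast
    let ?w = "\<lambda>u. (1 - 1/4) * z u + 1/4 * y u"
    have w: "lp_opt V E F ?w" by (rule lp_opt_convex_comb[OF conjunct1[OF z] y(1)]) simp_all
    let ?z' = "round_half \<circ> ?w"
    have z': "?P ?z'" using lp_opt_round_half[OF fin w] half_int_round_half by auto
    have "?halves ?z' \<subseteq> ?halves z - {v}"
    proof
      fix u assume u: "u \<in> ?halves ?z'"
      then have "?w u = 1/2" unfolding round_half_def by (auto split: if_splits)
      moreover have "half_int (z u)" "0 \<le> y u" "y u \<le> 1"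
        using z u lp_feas_bounds y(1) unfolding lp_opt_def by auto
      ultimately show "u \<in> ?halves z - {v}" using u y(2) v(2) unfolding half_int_def by auto
    qed
    then have "card (?halves ?z') \<le> card (?halves z - {v})" using fin by (intro card_mono) auto
    also have "\<dots> < card (?halves z)" using v fin by (intro psubset_card_mono) auto
    finally have "card (?halves ?z') < card (?halves z)" .
    then show ?thesis using zmin[OF z'] by simp
  qed
qed

section \<open>Strong branching with the product score\<close>

definition has_int_opt :: "nat set \<Rightarrow> nat set set \<Rightarrow> fixing \<Rightarrow> bool" where
  "has_int_opt V E F \<longleftrightarrow> (\<exists>z. lp_opt V E F z \<and> integral_on V z)"

lemma frac_var_unfixed:
  assumes "lp_opt V E F x" "j \<in> frac_vars V x"
  shows "j \<in> V" "F j = None"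
proof -
  show "j \<in> V" using assms(2) unfolding frac_vars_def by simp
  show "F j = None"
    using assms unfolding lp_opt_def lp_feas_def frac_vars_def by (cases "F j") (auto split: if_splits)
qed

lemma score_P_cases:
  assumes x: "lp_opt V E F x" and unfixed: "F u = None"
  obtains
    "lpval V E (F(u \<mapsto> True)) = lpval V E F \<or> lpval V E (F(u \<mapsto> False)) = lpval V E F"
    "score_P V E F u = 0"
  | "lpval V E F < lpval V E (F(u \<mapsto> True))" "lpval V E F < lpval V E (F(u \<mapsto> False))"
    "0 < score_P V E F u"
proof -
  let ?z = "lpval V E F"
  let ?zF = "lpval V E (F(u \<mapsto> False))"
  let ?zT = "lpval V E (F(u \<mapsto> True))"
  have z: "?z = ereal (obj V x)" by (rule lp_opt_lpval[OF x])
  have "?z \<le> ?zF" "?z \<le> ?zT" using lpval_le_upd[of F, OF unfixed] by blast+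
  then have "((?zT = ?z \<or> ?zF = ?z) \<and> score_P V E F u = 0) \<or> (?z < ?zT \<and> ?z < ?zF \<and> 0 < score_P V E F u)"
    unfolding score_P_def Let_def z
    by (cases ?zF rule: ereal_cases; cases ?zT rule: ereal_cases) auto
  then show ?thesis using that by blast
qed

lemma lp_opt_fixing_of_child:
  assumes fin: "finite V" and x: "lp_opt V E F x" and unfixed: "F u = None"
    and same: "lpval V E (F(u \<mapsto> b)) = lpval V E F"
  obtains y where "lp_opt V E F y" "y u = (if b then 1 else 0)"
proof -
  have "lpval V E (F(u \<mapsto> b)) \<noteq> \<infinity>" using same lp_opt_lpval[OF x] by simp
  then obtain y where y: "lp_opt V E (F(u \<mapsto> b)) y" using lp_opt_half_int_exists[OF fin] by blast
  then have "lp_feas V E F y" "y u = (if b then 1 else 0)"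
    using lp_feas_upd_iff[of F, OF unfixed] unfolding lp_opt_def by auto
  moreover have "ereal (obj V y) = lpval V E F" using y same unfolding lp_opt_def by simp
  ultimately show ?thesis using that unfolding lp_opt_def by blast
qed

lemma int_opt_var_if_score_nonpos:
  assumes fin: "finite V" and x: "lp_opt V E F x" and nonpos: "score_P V E F u \<le> 0"
  shows "\<exists>y. lp_opt V E F y \<and> (y u = 0 \<or> y u = 1)"
proof (cases "F u")
  case (Some b)
  then have "x u = (if b then 1 else 0)" using x lp_feas_fixed unfolding lp_opt_def by blast
  then show ?thesis using x by (cases b) auto
next
  case None
  show ?thesis
  proof (cases rule: score_P_cases[OF x None])
    case 1
    show ?thesis
    proof (cases "lpval V E (F(u \<mapsto> True)) = lpval V E F")
      case True
      from lp_opt_fixing_of_child[OF fin x None True] show ?thesis by auto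
    next
      case False
      with 1 have "lpval V E (F(u \<mapsto> False)) = lpval V E F" by simp
      from lp_opt_fixing_of_child[OF fin x None this] show ?thesis by auto
    qed
  next
    case 2
    then show ?thesis using nonpos by simp
  qed
qed

lemma lp_opt_child_of_integral:
  assumes z: "lp_opt V E F z" "integral_on V z" and j: "j \<in> V" and unfixed: "F j = None"
  shows "lp_opt V E (F(j \<mapsto> z j = 1)) z" "lpval V E (F(j \<mapsto> z j = 1)) = lpval V E F"
proof -
  have "z j = (if z j = 1 then 1 else 0)" using z(2) j unfolding integral_on_def by auto
  then have f: "lp_feas V E (F(j \<mapsto> z j = 1)) z"
    using lp_feas_upd_iff[of F, OF unfixed] z(1) unfolding lp_opt_def by auto
  have "lpval V E (F(j \<mapsto> z j = 1)) \<le> lpval V E F"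
    using lpval_le_obj[OF f] lp_opt_lpval[OF z(1)] by simp
  then show eq: "lpval V E (F(j \<mapsto> z j = 1)) = lpval V E F"
    using lpval_le_upd[of F, OF unfixed] by (simp add: order_antisym)
  show "lp_opt V E (F(j \<mapsto> z j = 1)) z" using f eq lp_opt_lpval[OF z(1)] unfolding lp_opt_def by simp
qed

text \<open>Branching on \<open>j \<in> I(N)\<close> means that the maximal score is \<open>score_P j = 0\<close>, so every
  fractional variable has score \<open>0\<close> and is therefore integral in some optimal solution.\<close>
lemma has_int_opt_if_branch_on_int_var:
  assumes fin: "finite V" and x: "lp_opt V E F x" and sb: "sb_choice V E F x j"
    and iv: "j \<in> int_vars V E F"
  shows "has_int_opt V E F"
proof -
  obtain y where y: "lp_opt V E F y" "y j = 0 \<or> y j = 1"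
    using iv unfolding int_vars_def by auto
  have jf: "j \<in> frac_vars V x" using sb unfolding sb_choice_def by simp
  note unfixed = frac_var_unfixed(2)[OF x jf]
  have "y j = (if y j = 1 then 1 else 0)" using y(2) by auto
  then have "lp_feas V E (F(j \<mapsto> y j = 1)) y"
    using lp_feas_upd_iff[of F, OF unfixed] y(1) unfolding lp_opt_def by auto
  then have "lpval V E (F(j \<mapsto> y j = 1)) \<le> lpval V E F"
    using lpval_le_obj lp_opt_lpval[OF y(1)] by metis
  then have score0: "score_P V E F j = 0"
    by (cases rule: score_P_cases[OF x unfixed]; cases "y j = 1") auto
  have "\<forall>u\<in>V. \<exists>y. lp_opt V E F y \<and> (y u = 0 \<or> y u = 1)"
  proof
    fix u assume u: "u \<in> V"
    show "\<exists>y. lp_opt V E F y \<and> (y u = 0 \<or> y u = 1)"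
    proof (cases "x u = 0 \<or> x u = 1")
      case True
      then show ?thesis using x by blast
    next
      case False
      then have "u \<in> frac_vars V x" using u unfolding frac_vars_def by auto
      then have "score_P V E F u \<le> 0" using sb score0 unfolding sb_choice_def by auto
      then show ?thesis by (rule int_opt_var_if_score_nonpos[OF fin x])
    qed
  qed
  then show ?thesis using lp_opt_integral_exists[OF fin x] unfolding has_int_opt_def by blast
qed

lemma lpval_children_gt_if_no_int_opt:
  assumes fin: "finite V" and x: "lp_opt V E F x" and sb: "sb_choice V E F x j"
    and no_int: "\<not> has_int_opt V E F"
  shows "lpval V E F < lpval V E (F(j \<mapsto> b))"
proof -
  obtain u where u: "u \<in> V" "\<forall>y. lp_opt V E F y \<longrightarrow> \<not> (y u = 0 \<or> y u = 1)"
    using lp_opt_integral_exists[OF fin x] no_int unfolding has_int_opt_def by blast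
  then have "u \<in> frac_vars V x" using x unfolding frac_vars_def by auto
  then have "score_P V E F u \<le> score_P V E F j" using sb unfolding sb_choice_def by auto
  moreover have "\<not> score_P V E F u \<le> 0" using int_opt_var_if_score_nonpos[OF fin x] u(2) by blast
  ultimately have "0 < score_P V E F j" by simp
  moreover have "F j = None" using frac_var_unfixed(2)[OF x] sb unfolding sb_choice_def by blast
  ultimately show ?thesis by (cases rule: score_P_cases[OF x]) (cases b; auto)+
qed

lemma edge_in_V: "is_vc_graph V E \<Longrightarrow> {u, v} \<in> E \<Longrightarrow> u \<in> V \<and> v \<in> V"
  unfolding is_vc_graph_def by (auto simp: doubleton_eq_iff)

lemma ip_feas_of_lp_feas: "lp_feas V E F x \<Longrightarrow> integral_on V x \<Longrightarrow> ip_feas V E x"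
  unfolding ip_feas_def lp_feas_def by auto

lemma OPT_le_obj: "ip_feas V E y \<Longrightarrow> OPT V E \<le> ereal (obj V y)"
  unfolding OPT_def by (rule INF_lower) simp

lemma OPT_attained:
  assumes g: "is_vc_graph V E"
  obtains y where "ip_feas V E y" "ereal (obj V y) = OPT V E"
proof -
  have fin: "finite V" using g unfolding is_vc_graph_def by simp
  let ?S = "{y. ip_feas V E y}"
  have "?S \<subseteq> {h. lp_feas V E Map.empty h \<and> (\<forall>v\<in>V. half_int (h v))}"
    unfolding ip_feas_def integral_on_def half_int_def by auto
  then have finS: "finite ?S" using finite_half_int_feas[OF fin] by (rule finite_subset)
  have "ip_feas V E (\<lambda>v. if v \<in> V then 1 else 0)"
    unfolding ip_feas_def lp_feas_def integral_on_def using edge_in_V[OF g] by auto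
  then have ne: "?S \<noteq> {}" by blast
  define y where "y = arg_min_on (obj V) ?S"
  have yS: "y \<in> ?S" unfolding y_def by (rule arg_min_if_finite(1)[OF finS ne])
  have "ereal (obj V y) \<le> OPT V E" unfolding OPT_def y_def
    by (rule INF_greatest) (use arg_min_least[OF finS ne] in auto)
  then show ?thesis using that yS OPT_le_obj by (simp add: order_antisym)
qed

lemma OPT_finite:
  assumes "is_vc_graph V E"
  shows "OPT V E < \<infinity>"
proof -
  obtain y where "ereal (obj V y) = OPT V E" using OPT_attained[OF assms] by blast
  then show ?thesis by force
qed

lemma OPT_le_incumbent: "\<forall>y\<in>S. ip_feas V E y \<Longrightarrow> OPT V E \<le> incumbent V S"
  unfolding incumbent_def by (rule INF_greatest) (auto intro: OPT_le_obj)

lemma incumbent_le_obj: "y \<in> S \<Longrightarrow> incumbent V S \<le> ereal (obj V y)"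
  unfolding incumbent_def by (rule INF_lower)

lemma OPT_le_lpval_if_has_int_opt: "has_int_opt V E F \<Longrightarrow> OPT V E \<le> lpval V E F"
  unfolding has_int_opt_def lp_opt_def by (metis ip_feas_of_lp_feas OPT_le_obj)

section \<open>Invariants of the branch-and-bound procedure\<close>

definition opt_found :: "nat set \<Rightarrow> nat set set \<Rightarrow> bb_state \<Rightarrow> bool" where
  "opt_found V E s \<longleftrightarrow> (\<exists>y\<in>fnd s. ip_feas V E y \<and> ereal (obj V y) = OPT V E)"

definition contains_opt :: "nat set \<Rightarrow> nat set set \<Rightarrow> fixing \<Rightarrow> bool" where
  "contains_opt V E F \<longleftrightarrow> (\<exists>y. ip_feas V E y \<and> ereal (obj V y) = OPT V E \<and> lp_feas V E F y)"

definition bb_inv :: "nat set \<Rightarrow> nat set set \<Rightarrow> bb_state \<Rightarrow> bool" where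
  "bb_inv V E s \<longleftrightarrow> (\<forall>y\<in>fnd s. ip_feas V E y) \<and> (\<forall>M\<in>opn s. dom M \<subseteq> V) \<and>
     (opt_found V E s \<or> (\<exists>M\<in>opn s. contains_opt V E M))"

lemma lpval_le_OPT_if_contains_opt: "contains_opt V E F \<Longrightarrow> lpval V E F \<le> OPT V E"
  unfolding contains_opt_def by (metis lpval_le_obj)

lemma contains_opt_child:
  assumes "contains_opt V E F" "j \<in> V" "F j = None"
  obtains b where "contains_opt V E (F(j \<mapsto> b))"
proof -
  obtain y where y: "ip_feas V E y" "ereal (obj V y) = OPT V E" "lp_feas V E F y"
    using assms(1) unfolding contains_opt_def by blast
  then have "y j = (if y j = 1 then 1 else 0)" using assms(2) unfolding ip_feas_def integral_on_def by auto
  then have "lp_feas V E (F(j \<mapsto> y j = 1)) y" using lp_feas_upd_iff[of F, OF assms(3)] y(3) by simp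
  then show ?thesis using that y(1,2) unfolding contains_opt_def by blast
qed

lemma bb_inv_init:
  assumes "is_vc_graph V E"
  shows "bb_inv V E bb_init"
proof -
  obtain y where "ip_feas V E y" "ereal (obj V y) = OPT V E" using OPT_attained[OF assms] by blast
  moreover then have "lp_feas V E Map.empty y" unfolding ip_feas_def by simp
  ultimately show ?thesis unfolding bb_inv_def bb_init_def contains_opt_def by auto
qed

lemma bb_inv_branch:
  assumes g: "is_vc_graph V E" and inv: "bb_inv V E s" and br: "bb_branch V E s N x j s'"
  shows "bb_inv V E s'"
proof -
  have N: "N \<in> opn s" "lp_opt V E N x" "j \<in> frac_vars V x"
    using br unfolding bb_branch_def wb_select_def sb_choice_def by auto
  note j = frac_var_unfixed[OF N(2,3)]
  have opn': "opn s' = (opn s - {N}) \<union> {C \<in> {N(j \<mapsto> False), N(j \<mapsto> True)}.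
      lpval V E C < \<infinity> \<and> lpval V E C \<le> incumbent V (fnd s)}" and fnd': "fnd s' = fnd s"
    using br unfolding bb_branch_def by auto
  have "dom (N(j \<mapsto> b)) \<subseteq> V" for b using inv N(1) j(1) unfolding bb_inv_def by auto
  then have dom': "\<forall>M\<in>opn s'. dom M \<subseteq> V" using inv unfolding bb_inv_def opn' by blast
  have "opt_found V E s' \<or> (\<exists>M\<in>opn s'. contains_opt V E M)"
  proof (cases "opt_found V E s")
    case False
    then obtain M where M: "M \<in> opn s" "contains_opt V E M" using inv unfolding bb_inv_def by blast
    show ?thesis
    proof (cases "M = N")
      case True
      obtain b where C: "contains_opt V E (N(j \<mapsto> b))" using contains_opt_child M(2) True j by metis
      have "lpval V E (N(j \<mapsto> b)) < \<infinity>" "lpval V E (N(j \<mapsto> b)) \<le> incumbent V (fnd s)"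
        using lpval_le_OPT_if_contains_opt[OF C] OPT_finite[OF g] OPT_le_incumbent inv
        unfolding bb_inv_def by (auto intro: order.trans)
      then have "N(j \<mapsto> b) \<in> opn s'" unfolding opn' by (cases b) auto
      then show ?thesis using C by blast
    qed (use M opn' in auto)
  qed (simp add: opt_found_def fnd')
  then show ?thesis using inv dom' fnd' unfolding bb_inv_def by simp
qed

lemma bb_inv_integral:
  assumes inv: "bb_inv V E s" and bi: "bb_integral V E s N x s'"
  shows "bb_inv V E s'"
proof -
  have x: "lp_opt V E N x" "ip_feas V E x"
    using bi ip_feas_of_lp_feas unfolding bb_integral_def lp_opt_def by auto
  have opn': "opn s' = {M \<in> opn s - {N}. lpval V E M \<le> incumbent V (insert x (fnd s))}"
    and fnd': "fnd s' = insert x (fnd s)"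
    using bi unfolding bb_integral_def by auto
  have fip': "\<forall>y\<in>fnd s'. ip_feas V E y" using inv x(2) unfolding bb_inv_def fnd' by auto
  have "opt_found V E s' \<or> (\<exists>M\<in>opn s'. contains_opt V E M)"
  proof (cases "opt_found V E s")
    case False
    then obtain M where M: "M \<in> opn s" "contains_opt V E M" using inv unfolding bb_inv_def by blast
    note M_le = lpval_le_OPT_if_contains_opt[OF M(2)]
    show ?thesis
    proof (cases "M = N")
      case True
      then have "ereal (obj V x) = OPT V E"
        using M_le lp_opt_lpval[OF x(1)] OPT_le_obj[OF x(2)] by simp
      then show ?thesis using x(2) unfolding opt_found_def fnd' by blast
    next
      case False
      have "lpval V E M \<le> incumbent V (insert x (fnd s))"
        using M_le OPT_le_incumbent[OF fip'[unfolded fnd']] by simp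
      then show ?thesis using M False unfolding opn' by blast
    qed
  qed (auto simp: opt_found_def fnd')
  then show ?thesis using inv fip' unfolding bb_inv_def opn' by auto
qed

lemma bb_inv_prune:
  assumes g: "is_vc_graph V E" and inv: "bb_inv V E s" and bp: "bb_prune V E s N s'"
  shows "bb_inv V E s'"
proof -
  have pruned: "lpval V E N = \<infinity> \<or> incumbent V (fnd s) < lpval V E N"
    and s': "s' = \<lparr>opn = opn s - {N}, fnd = fnd s\<rparr>"
    using bp unfolding bb_prune_def by auto
  have "\<not> contains_opt V E N"
    using lpval_le_OPT_if_contains_opt OPT_finite[OF g] OPT_le_incumbent pruned inv
    unfolding bb_inv_def by (metis leD order.trans)
  then show ?thesis using inv unfolding bb_inv_def opt_found_def s' by auto
qed

lemma bb_reach_inv: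
  assumes g: "is_vc_graph V E"
  shows "bb_reach V E s \<Longrightarrow> bb_inv V E s"
proof (induction rule: bb_reach.induct)
  case 1
  show ?case by (rule bb_inv_init[OF g])
next
  case (2 s b s')
  from 2(2) show ?case
    by cases (use bb_inv_branch bb_inv_integral bb_inv_prune g 2(3) in blast)+
qed

lemma opt_found_run: "bb_run V E s k t \<Longrightarrow> opt_found V E s \<Longrightarrow> opt_found V E t"
proof (induction rule: bb_run.induct)
  case (2 s b s1 k t)
  then have "fnd s \<subseteq> fnd s1"
    by (cases rule: bb_step.cases) (auto simp: bb_branch_def bb_integral_def bb_prune_def)
  then show ?case using 2 unfolding opt_found_def by blast
qed

section \<open>Counting branchings\<close>

definition bad_opt_node :: "nat set \<Rightarrow> nat set set \<Rightarrow> fixing \<Rightarrow> nat \<Rightarrow> bool" where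
  "bad_opt_node V E M d \<longleftrightarrow> lpval V E M = OPT V E \<and> depth M = d \<and> \<not> has_int_opt V E M"

text \<open>Worst-bound selection with deepest tie-breaking only processes open nodes of LP value
  \<open>OPT\<close> at depth \<open>d\<close>, the depth of the deepest such node with an integral optimum; at most one
  node at that depth lacks an integral optimum, and if \<open>m = 0\<close> none does. Each branching
  decreases the potential \<open>2 (n - d) + m\<close>.\<close>
definition opt_frontier :: "nat set \<Rightarrow> nat set set \<Rightarrow> bb_state \<Rightarrow> nat \<Rightarrow> nat \<Rightarrow> bool" where
  "opt_frontier V E t d m \<longleftrightarrow>
    (\<forall>M\<in>opn t. OPT V E \<le> lpval V E M \<and> dom M \<subseteq> V) \<and>
    (\<forall>M\<in>opn t. lpval V E M = OPT V E \<longrightarrow> depth M \<le> d) \<and>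
    (\<exists>G\<in>opn t. has_int_opt V E G \<and> lpval V E G = OPT V E \<and> depth G = d) \<and> m \<le> 1 \<and>
    (\<forall>M1\<in>opn t. \<forall>M2\<in>opn t. bad_opt_node V E M1 d \<and> bad_opt_node V E M2 d \<longrightarrow> M1 = M2) \<and>
    (m = 0 \<longrightarrow> (\<forall>M\<in>opn t. \<not> bad_opt_node V E M d))"

lemma depth_upd: "finite (dom M) \<Longrightarrow> M j = None \<Longrightarrow> depth (M(j \<mapsto> b)) = Suc (depth M)"
  unfolding depth_def by (simp add: card_insert_disjoint domIff)

lemma bb_branch_opn_iff:
  "bb_branch V E t N x j t' \<Longrightarrow> M \<in> opn t' \<longleftrightarrow> (M \<in> opn t \<and> M \<noteq> N) \<or>
     ((M = N(j \<mapsto> False) \<or> M = N(j \<mapsto> True)) \<and> lpval V E M < \<infinity> \<and> lpval V E M \<le> incumbent V (fnd t))"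
  unfolding bb_branch_def by auto

lemma opt_frontier_branch_int_opt:
  assumes g: "is_vc_graph V E"
    and open_ge: "\<forall>M\<in>opn t. OPT V E \<le> lpval V E M \<and> dom M \<subseteq> V"
    and open_depth: "\<forall>M\<in>opn t. lpval V E M = OPT V E \<longrightarrow> depth M \<le> d"
    and br: "bb_branch V E t N x j t'" and int_opt: "has_int_opt V E N"
    and N: "lpval V E N = OPT V E" "depth N = d" and inc: "OPT V E \<le> incumbent V (fnd t)"
  shows "opt_frontier V E t' (Suc d) 1" "Suc d \<le> card V"
proof -
  have fin: "finite V" using g unfolding is_vc_graph_def by simp
  have Nin: "N \<in> opn t" using br unfolding bb_branch_def wb_select_def by simp
  have "lp_opt V E N x" "j \<in> frac_vars V x" using br unfolding bb_branch_def sb_choice_def by auto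
  note j = frac_var_unfixed[OF this]
  have domN: "dom N \<subseteq> V" using open_ge Nin by blast
  then have depth_child: "depth (N(j \<mapsto> b)) = Suc d" for b
    using depth_upd[OF finite_subset[OF domN fin] j(2)] N(2) by simp
  have dom_child: "dom (N(j \<mapsto> b)) \<subseteq> V" for b using domN j(1) by simp
  have ge_child: "OPT V E \<le> lpval V E (N(j \<mapsto> b))" for b using lpval_le_upd[of N j V E, OF j(2)] N(1) by simp
  obtain z where z: "lp_opt V E N z" "integral_on V z" using int_opt unfolding has_int_opt_def by blast
  define b where "b = (z j = 1)"
  have C: "lp_opt V E (N(j \<mapsto> b)) z" "lpval V E (N(j \<mapsto> b)) = OPT V E"
    using lp_opt_child_of_integral[OF z j] N(1) unfolding b_def by auto
  have C_int: "has_int_opt V E (N(j \<mapsto> b))" using C z(2) unfolding has_int_opt_def by blast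
  have "N(j \<mapsto> b) \<in> opn t'"
    using bb_branch_opn_iff[OF br] C(2) OPT_finite[OF g] inc by (cases b) auto
  then have deepest: "\<exists>G\<in>opn t'. has_int_opt V E G \<and> lpval V E G = OPT V E \<and> depth G = Suc d"
    using C(2) C_int depth_child by blast
  have ge': "\<forall>M\<in>opn t'. OPT V E \<le> lpval V E M \<and> dom M \<subseteq> V"
    using open_ge bb_branch_opn_iff[OF br] ge_child dom_child by blast
  have depth': "\<forall>M\<in>opn t'. lpval V E M = OPT V E \<longrightarrow> depth M \<le> Suc d"
    using bb_branch_opn_iff[OF br] open_depth depth_child by (metis le_SucI order_refl)
  have sibling: "M = N(j \<mapsto> \<not> b)" if "M \<in> opn t'" "bad_opt_node V E M (Suc d)" for M
  proof -
    have "M \<noteq> N(j \<mapsto> b)" "depth M = Suc d" "lpval V E M = OPT V E"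
      using that(2) C_int unfolding bad_opt_node_def by auto
    then show ?thesis using bb_branch_opn_iff[OF br, of M] that(1) open_depth by (cases b) auto
  qed
  then have "\<forall>M1\<in>opn t'. \<forall>M2\<in>opn t'. bad_opt_node V E M1 (Suc d) \<and> bad_opt_node V E M2 (Suc d) \<longrightarrow> M1 = M2"
    by blast
  then show "opt_frontier V E t' (Suc d) 1" using deepest ge' depth' unfolding opt_frontier_def by simp
  show "Suc d \<le> card V" using card_mono[OF fin dom_child[of b]] depth_child[of b]
    unfolding depth_def by simp
qed

lemma wb_select_in_opt_frontier:
  assumes fr: "opt_frontier V E t d m" and ws: "wb_select V E (opn t) N"
  shows "N \<in> opn t" "lpval V E N = OPT V E" "depth N = d"
proof -
  obtain G where G: "G \<in> opn t" "lpval V E G = OPT V E" "depth G = d"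
    using fr unfolding opt_frontier_def by blast
  show N: "N \<in> opn t" using ws unfolding wb_select_def by simp
  have min: "\<forall>M\<in>opn t. lpval V E N \<le> lpval V E M"
    and deepest: "\<forall>M\<in>opn t. lpval V E M = lpval V E N \<longrightarrow> depth M \<le> depth N"
    using ws unfolding wb_select_def by auto
  have "lpval V E N \<le> OPT V E" using min G by metis
  moreover have "OPT V E \<le> lpval V E N" using fr N unfolding opt_frontier_def by blast
  ultimately show v: "lpval V E N = OPT V E" by simp
  have "d \<le> depth N" using deepest G v by metis
  moreover have "depth N \<le> d" using fr N v unfolding opt_frontier_def by blast
  ultimately show "depth N = d" by simp
qed

lemma opt_frontier_branch_no_int_opt:
  assumes g: "is_vc_graph V E" and fr: "opt_frontier V E t d m"
    and br: "bb_branch V E t N x j t'" and no_int: "\<not> has_int_opt V E N"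
  shows "m = 1" "opt_frontier V E t' d 0"
proof -
  have fin: "finite V" using g unfolding is_vc_graph_def by simp
  have ws: "wb_select V E (opn t) N" and x: "lp_opt V E N x" and sb: "sb_choice V E N x j"
    using br unfolding bb_branch_def by auto
  note N = wb_select_in_opt_frontier[OF fr ws]
  have bad: "bad_opt_node V E N d" using no_int N unfolding bad_opt_node_def by simp
  then show "m = 1" using fr N(1) unfolding opt_frontier_def by auto
  note j = frac_var_unfixed[OF x conjunct1[OF sb[unfolded sb_choice_def]]]
  have gt: "OPT V E < lpval V E (N(j \<mapsto> b))" for b
    using lpval_children_gt_if_no_int_opt[OF fin x sb no_int] N(2) by metis
  have dom_child: "dom (N(j \<mapsto> b)) \<subseteq> V" for b using fr N(1) j(1) unfolding opt_frontier_def by auto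
  have old: "M \<in> opn t \<and> M \<noteq> N" if "M \<in> opn t'" "lpval V E M = OPT V E" for M
    using bb_branch_opn_iff[OF br] gt that by (metis less_irrefl)
  obtain G where G: "G \<in> opn t" "has_int_opt V E G" "lpval V E G = OPT V E" "depth G = d"
    using fr unfolding opt_frontier_def by blast
  have "G \<noteq> N" using G(2) no_int by auto
  then have "G \<in> opn t'" using bb_branch_opn_iff[OF br] G(1) by blast
  moreover have "\<forall>M\<in>opn t'. OPT V E \<le> lpval V E M \<and> dom M \<subseteq> V"
    using fr bb_branch_opn_iff[OF br] gt dom_child unfolding opt_frontier_def by (metis less_imp_le)
  moreover have "\<forall>M\<in>opn t'. lpval V E M = OPT V E \<longrightarrow> depth M \<le> d"
    using fr old unfolding opt_frontier_def by blast
  moreover have "\<forall>M\<in>opn t'. \<not> bad_opt_node V E M d"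
  proof (intro ballI notI)
    fix M assume "M \<in> opn t'" "bad_opt_node V E M d"
    then have "M \<in> opn t" "M \<noteq> N" using old unfolding bad_opt_node_def by auto
    then show False using fr N(1) bad \<open>bad_opt_node V E M d\<close> unfolding opt_frontier_def by blast
  qed
  ultimately show "opt_frontier V E t' d 0" using G unfolding opt_frontier_def by auto
qed

lemma opt_frontier_step:
  assumes g: "is_vc_graph V E" and inv: "bb_inv V E t" and fr: "opt_frontier V E t d m"
    and step: "bb_step V E t b t'"
  shows "opt_found V E t' \<or> (\<exists>d' m'. opt_frontier V E t' d' m' \<and>
     (if b then 1 else 0) + 2 * (card V - d') + m' \<le> 2 * (card V - d) + m)"
  using step
proof cases
  case (1 N x j)
  have ws: "wb_select V E (opn t) N" using 1(2) unfolding bb_branch_def by simp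
  note N = wb_select_in_opt_frontier[OF fr ws]
  show ?thesis
  proof (cases "has_int_opt V E N")
    case True
    have "OPT V E \<le> incumbent V (fnd t)" using inv OPT_le_incumbent unfolding bb_inv_def by blast
    then have "opt_frontier V E t' (Suc d) 1" "Suc d \<le> card V"
      using opt_frontier_branch_int_opt[OF g _ _ 1(2) True N(2,3)] fr
      unfolding opt_frontier_def by auto
    then show ?thesis using 1(1) by (intro disjI2 exI[of _ "Suc d"] exI[of _ 1]) auto
  next
    case False
    from opt_frontier_branch_no_int_opt[OF g fr 1(2) False] show ?thesis
      using 1(1) by (intro disjI2 exI[of _ d] exI[of _ 0]) auto
  qed
next
  case (2 N x)
  then have "lpval V E N = OPT V E" "lp_opt V E N x" "ip_feas V E x" "fnd t' = insert x (fnd t)"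
    using wb_select_in_opt_frontier[OF fr] ip_feas_of_lp_feas
    unfolding bb_integral_def lp_opt_def by auto
  then show ?thesis unfolding opt_found_def by (metis insertI1 lp_opt_lpval)
next
  case (3 N)
  then have "lpval V E N = OPT V E" "lpval V E N = \<infinity> \<or> incumbent V (fnd t) < lpval V E N"
    using wb_select_in_opt_frontier[OF fr] unfolding bb_prune_def by auto
  then show ?thesis
    using inv OPT_le_incumbent OPT_finite[OF g] unfolding bb_inv_def by (metis leD less_irrefl)
qed

lemma opt_frontier_run:
  assumes g: "is_vc_graph V E"
  shows "bb_run V E t k t' \<Longrightarrow> bb_reach V E t \<Longrightarrow> opt_frontier V E t d m \<Longrightarrow>
     opt_found V E t' \<or> (\<exists>d' m'. opt_frontier V E t' d' m' \<and> k + 2 * (card V - d') + m' \<le> 2 * (card V - d) + m)"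
proof (induction arbitrary: d m rule: bb_run.induct)
  case 1
  then show ?case by (intro disjI2 exI[of _ d] exI[of _ m]) simp
next
  case (2 t b t1 k t')
  have reach: "bb_reach V E t1" using 2(4,1) by (rule bb_reach.intros(2))
  from opt_frontier_step[OF g bb_reach_inv[OF g 2(4)] 2(5) 2(1)] show ?case
  proof
    assume "opt_found V E t1"
    then show ?thesis using opt_found_run[OF 2(2)] by simp
  next
    assume "\<exists>d' m'. opt_frontier V E t1 d' m' \<and>
      (if b then 1 else 0) + 2 * (card V - d') + m' \<le> 2 * (card V - d) + m"
    then obtain d1 m1 where d1: "opt_frontier V E t1 d1 m1"
      "(if b then 1 else 0) + 2 * (card V - d1) + m1 \<le> 2 * (card V - d) + m" by blast
    from 2(3)[OF reach d1(1)] d1(2) show ?thesis by (cases b) force+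
  qed
qed

lemma dual_bound_wb_select: "wb_select V E (opn s) N \<Longrightarrow> dual_bound V E s = lpval V E N"
  unfolding dual_bound_def wb_select_def by (metis INF_greatest INF_lower order_antisym)

lemma lpval_wb_select_le_OPT:
  assumes inv: "bb_inv V E s" and ws: "wb_select V E (opn s) N"
    and not_pruned: "lpval V E N \<le> incumbent V (fnd s)"
  shows "lpval V E N \<le> OPT V E"
  using inv unfolding bb_inv_def
proof (elim conjE disjE bexE)
  assume "opt_found V E s"
  then obtain y where "y \<in> fnd s" "ereal (obj V y) = OPT V E" unfolding opt_found_def by blast
  then show ?thesis using not_pruned incumbent_le_obj by (metis order.trans)
next
  fix M assume "M \<in> opn s" "contains_opt V E M"
  then show ?thesis
    using ws lpval_le_OPT_if_contains_opt unfolding wb_select_def by (metis order.trans)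
qed

lemma branch_on_int_var:
  assumes g: "is_vc_graph V E" and reach: "bb_reach V E s"
    and br: "bb_branch V E s N x j s'" and iv: "j \<in> int_vars V E N"
  shows "has_int_opt V E N" "lpval V E N = OPT V E"
proof -
  have fin: "finite V" using g unfolding is_vc_graph_def by simp
  show int_opt: "has_int_opt V E N"
    using has_int_opt_if_branch_on_int_var[OF fin _ _ iv] br unfolding bb_branch_def by blast
  show "lpval V E N = OPT V E"
    using lpval_wb_select_le_OPT[OF bb_reach_inv[OF g reach]] OPT_le_lpval_if_has_int_opt[OF int_opt] br
    unfolding bb_branch_def by (metis order_antisym)
qed

lemma branchings_after_branch_on_int_var:
  assumes g: "is_vc_graph V E" and reach: "bb_reach V E s"
    and br: "bb_branch V E s N x j s'" and iv: "j \<in> int_vars V E N"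
    and run: "bb_run V E s' k t"
  shows "opt_found V E t \<or> (opn t \<noteq> {} \<and> k \<le> 2 * card V)"
proof -
  note N = branch_on_int_var[OF g reach br iv]
  have inv: "bb_inv V E s" by (rule bb_reach_inv[OF g reach])
  have ws: "wb_select V E (opn s) N" using br unfolding bb_branch_def by simp
  have "\<forall>M\<in>opn s. OPT V E \<le> lpval V E M \<and> dom M \<subseteq> V"
    "\<forall>M\<in>opn s. lpval V E M = OPT V E \<longrightarrow> depth M \<le> depth N"
    using ws N(2) inv unfolding wb_select_def bb_inv_def by metis+
  moreover have "OPT V E \<le> incumbent V (fnd s)" using inv OPT_le_incumbent unfolding bb_inv_def by blast
  ultimately have fr: "opt_frontier V E s' (Suc (depth N)) 1" and "Suc (depth N) \<le> card V"
    using opt_frontier_branch_int_opt[OF g _ _ br N(1,2) refl] by auto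
  moreover have "bb_reach V E s'" using reach bb_step.intros(1)[OF br] by (rule bb_reach.intros(2))
  ultimately show ?thesis
    using opt_frontier_run[OF g run _ fr] unfolding opt_frontier_def by fastforce
qed

theorem proposition2p2:
  shows "\<exists>c::real. \<forall>V E s N x j s'.
     is_vc_graph V E \<and> bb_reach V E s \<and> bb_branch V E s N x j s' \<and> j \<in> int_vars V E N \<longrightarrow>
       dual_bound V E s = OPT V E \<and>
       (\<forall>k t. bb_run V E s' k t \<and> (c * real (card V) < real k \<or> opn t = {}) \<longrightarrow>
          (\<exists>y\<in>fnd t. ip_feas V E y \<and> ereal (obj V y) = OPT V E))"
proof (intro exI[of _ 2] allI impI conjI)
  fix V E s N x j s' k t
  assume "is_vc_graph V E \<and> bb_reach V E s \<and> bb_branch V E s N x j s' \<and> j \<in> int_vars V E N"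
  then have g: "is_vc_graph V E" and reach: "bb_reach V E s" and br: "bb_branch V E s N x j s'"
    and iv: "j \<in> int_vars V E N" by auto
  show "dual_bound V E s = OPT V E"
    using dual_bound_wb_select branch_on_int_var(2)[OF g reach br iv] br unfolding bb_branch_def by auto
  assume "bb_run V E s' k t \<and> (2 * real (card V) < real k \<or> opn t = {})"
  then show "\<exists>y\<in>fnd t. ip_feas V E y \<and> ereal (obj V y) = OPT V E"
    using branchings_after_branch_on_int_var[OF g reach br iv] unfolding opt_found_def by fastforce
qed

end
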